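(* Let $\kappa$ be a regular cardinal. There is a $(\kappa,\kappa^+)$-Borel set (a subset of $\kappa^\kappa$) which is not $\kappa$-Borel.
   Context: For $X\subseteq\kappa$ with $|X|<\kappa$ and $\eta:X\to\kappa$, let $N_\eta=\{\zeta\in\kappa^\kappa\mid\eta\subseteq\zeta\}$; these sets and $\emptyset$ are the basic $\kappa$-open sets. For a cardinal $\lambda$, the $(\kappa,\lambda)$-Borel sets form the smallest class containing the basic $\kappa$-open sets and closed under complements, unions of at most $\lambda$ sets and intersections of at most $\lambda$ sets; $\kappa$-Borel means $(\kappa,\kappa)$-Borel. *)

theory Defs
  imports Main
begin

text \<open>A cardinal \<kappa> is represented by a cardinal order r on a type 'a with Field r = UNIV,
so that \<kappa> = UNIV :: 'a set and \<kappa>^\<kappa> = ('a \<Rightarrow> 'a).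
The parameter l is a cardinal order representing \<lambda>.\<close>

definition basic_open :: "'a rel \<Rightarrow> ('a \<Rightarrow> 'a) set set" where
  "basic_open r = {{\<zeta>. \<forall>x\<in>X. \<zeta> x = \<eta> x} | X \<eta>.
        X \<subseteq> Field r \<and> (card_of X, r) \<in> ordLess} \<union> {{}}"

inductive_set kl_borel :: "'a rel \<Rightarrow> 'c rel \<Rightarrow> ('a \<Rightarrow> 'a) set set"
  for r :: "'a rel" and l :: "'c rel" where
  basic: "A \<in> basic_open r \<Longrightarrow> A \<in> kl_borel r l"
| compl: "A \<in> kl_borel r l \<Longrightarrow> - A \<in> kl_borel r l"
| union: "(\<And>B. B \<in> F \<Longrightarrow> B \<in> kl_borel r l) \<Longrightarrow> (card_of F, l) \<in> ordLeq \<Longrightarrow> \<Union>F \<in> kl_borel r l"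
| inter: "(\<And>B. B \<in> F \<Longrightarrow> B \<in> kl_borel r l) \<Longrightarrow> (card_of F, l) \<in> ordLeq \<Longrightarrow> \<Inter>F \<in> kl_borel r l"

end

theory Submission
  imports Defs
begin

(* A code is a function c :: \<kappa> \<Rightarrow> \<kappa> which, through a pairing \<kappa> \<times> \<kappa> \<rightarrow> \<kappa>, is read as a tag
   together with \<kappa> subcodes; the tag says whether c describes a basic set, the complement of
   its first subcode, or the union of all its subcodes. Evaluating c at a point y is an inductive
   relation whose derivations carry ranks below \<kappa>\<^sup>+. As \<kappa>\<^sup>+ is regular, \<kappa> ranks are
   always bounded below \<kappa>\<^sup>+, so by induction every \<kappa>-Borel set B has a code whose evaluation
   at every y is the truth value of y \<in> B.
   Let D be the set of y which, read as codes, evaluate to False at themselves. A code c of D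
   would give c \<in> D iff c \<notin> D, so D is not \<kappa>-Borel. On the other hand, coding a code and a
   point as one function, the pairs evaluating with rank \<alpha> form a (\<kappa>,\<kappa>\<^sup>+)-Borel set by
   induction on \<alpha>, since each step only takes \<kappa>-fold unions and intersections and preimages
   under substitutions z \<mapsto> z \<circ> h; D is the union of \<kappa>\<^sup>+ many preimages of these sets. *)

unbundle cardinal_syntax

lemma finite_ordLess_Card_order:
  assumes "finite A" "Card_order r" "infinite (Field r)"
  shows "|A| <o r"
  using finite_ordLess_infinite[OF card_of_Well_order card_order_on_well_order_on[OF assms(2)]]
    assms by (simp add: Field_card_of)

lemma regularCard_bounded_underS:
  assumes "Card_order W" "regularCard W" "infinite (Field W)" "K \<subseteq> Field W" "|K| <o W"
  shows "\<exists>\<beta>\<in>Field W. K \<subseteq> underS W \<beta>"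
proof (rule regularCard_UNION[OF assms(1,2) _ _ assms(5)])
  have "Well_order W" using assms(1) by (rule card_order_on_well_order_on)
  then show "relChain W (underS W)"
    unfolding relChain_def using underS_incr[of W] by (auto simp: order_on_defs)
  show "K \<subseteq> (\<Union>\<beta>\<in>Field W. underS W \<beta>)"
    using infinite_Card_order_limit[OF assms(1,3)] assms(4) by (force simp: underS_def)
qed

lemma card_of_UNIV_ordIso:
  fixes r :: "'a rel"
  assumes "Card_order r" and "Field r = UNIV"
  shows "|UNIV :: 'a set| =o r"
  using card_of_Field_ordIso[OF assms(1)] assms(2) by simp

lemma cardSuc_bounded_underS:
  assumes "Card_order r" "infinite (Field r)" "K \<subseteq> Field (cardSuc r)" "|K| \<le>o r"
  shows "\<exists>\<beta>\<in>Field (cardSuc r). K \<subseteq> underS (cardSuc r) \<beta>"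
proof (rule regularCard_bounded_underS[OF cardSuc_Card_order infinite_cardSuc_regularCard])
  show "infinite (Field (cardSuc r))"
    using Cinfinite_cardSuc assms(1,2) unfolding cinfinite_def by blast
  show "|K| <o cardSuc r" using ordLeq_ordLess_trans[OF assms(4) cardSuc_greater[OF assms(1)]] .
qed (use assms in auto)

lemma basic_openI:
  "X \<subseteq> Field r \<Longrightarrow> |X| <o r \<Longrightarrow> {\<zeta>. \<forall>x\<in>X. \<zeta> x = \<eta> x} \<in> basic_open r"
  unfolding basic_open_def by blast

lemma basic_open_vimage_comp:
  assumes "Field r = UNIV" and "A \<in> basic_open r"
  shows "(\<lambda>\<zeta>. \<zeta> \<circ> h) -` A \<in> basic_open r"
proof -
  consider (empty) "A = {}"
    | (cylinder) X \<eta> where "A = {\<zeta>. \<forall>x\<in>X. \<zeta> x = \<eta> x}" "|X| <o r"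
    using assms(2) unfolding basic_open_def by blast
  then show ?thesis
  proof cases
    case empty
    then show ?thesis by (simp add: basic_open_def)
  next
    case (cylinder X \<eta>)
    show ?thesis
    proof (cases "\<forall>x\<in>X. \<forall>x'\<in>X. h x = h x' \<longrightarrow> \<eta> x = \<eta> x'")
      case True
      have "\<eta> (inv_into X h (h x)) = \<eta> x" if "x \<in> X" for x
      proof -
        have "inv_into X h (h x) \<in> X" "h (inv_into X h (h x)) = h x"
          using that by (simp_all add: inv_into_into f_inv_into_f)
        then show ?thesis using True that by blast
      qed
      then have "(\<lambda>\<zeta>. \<zeta> \<circ> h) -` A = {\<zeta>. \<forall>u\<in>h ` X. \<zeta> u = \<eta> (inv_into X h u)}"
        using cylinder(1) by auto
      also have "\<dots> \<in> basic_open r"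
        using assms(1) ordLeq_ordLess_trans[OF card_of_image cylinder(2)]
        by (intro basic_openI) auto
      finally show ?thesis .
    next
      case False
      then obtain x x' where "x \<in> X" "x' \<in> X" "h x = h x'" "\<eta> x \<noteq> \<eta> x'" by blast
      then have "(\<lambda>\<zeta>. \<zeta> \<circ> h) -` A = {}" using cylinder(1) by auto metis
      then show ?thesis by (simp add: basic_open_def)
    qed
  qed
qed

lemma kl_borel_empty: "{} \<in> kl_borel r l"
  by (rule kl_borel.basic) (simp add: basic_open_def)

lemma kl_borel_UN:
  assumes "\<And>i. i \<in> I \<Longrightarrow> f i \<in> kl_borel r l" and "|I| \<le>o l"
  shows "(\<Union>i\<in>I. f i) \<in> kl_borel r l"
  using assms ordLeq_transitive[OF card_of_image assms(2)] by (intro kl_borel.union) auto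

lemma kl_borel_INT:
  assumes "\<And>i. i \<in> I \<Longrightarrow> f i \<in> kl_borel r l" and "|I| \<le>o l"
  shows "(\<Inter>i\<in>I. f i) \<in> kl_borel r l"
  using assms ordLeq_transitive[OF card_of_image assms(2)] by (intro kl_borel.inter) auto

lemma kl_borel_Un:
  assumes "Card_order l" "infinite (Field l)" "A \<in> kl_borel r l" "B \<in> kl_borel r l"
  shows "A \<union> B \<in> kl_borel r l"
proof -
  have "|{A, B}| \<le>o l" using assms(1,2) by (intro ordLess_imp_ordLeq finite_ordLess_Card_order) simp
  then show ?thesis using kl_borel.union[of "{A, B}"] assms(3,4) by auto
qed

lemma kl_borel_Int:
  assumes "Card_order l" "infinite (Field l)" "A \<in> kl_borel r l" "B \<in> kl_borel r l"
  shows "A \<inter> B \<in> kl_borel r l"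
proof -
  have "|{A, B}| \<le>o l" using assms(1,2) by (intro ordLess_imp_ordLeq finite_ordLess_Card_order) simp
  then show ?thesis using kl_borel.inter[of "{A, B}"] assms(3,4) by auto
qed

lemma kl_borel_point:
  assumes "Card_order r" "infinite (Field r)" "u \<in> Field r"
  shows "{\<zeta>. \<zeta> u = k} \<in> kl_borel r l"
proof -
  have "{\<zeta>. \<zeta> u = k} = {\<zeta>. \<forall>x\<in>{u}. \<zeta> x = (\<lambda>_. k) x}" by simp
  also have "\<dots> \<in> basic_open r"
    using assms by (intro basic_openI finite_ordLess_Card_order) auto
  finally show ?thesis by (rule kl_borel.basic)
qed

lemma kl_borel_vimage_comp:
  assumes "Field r = UNIV" and "A \<in> kl_borel r l"
  shows "(\<lambda>\<zeta>. \<zeta> \<circ> h) -` A \<in> kl_borel r l"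
  using assms(2)
proof (induction rule: kl_borel.induct)
  case (basic A)
  then show ?case using assms(1) by (intro kl_borel.basic basic_open_vimage_comp)
next
  case (compl A)
  then show ?case by (simp add: vimage_Compl kl_borel.compl)
next
  case (union F)
  then show ?case by (simp add: vimage_Union kl_borel_UN)
next
  case (inter F)
  have "(\<lambda>\<zeta>. \<zeta> \<circ> h) -` \<Inter>F = (\<Inter>B\<in>F. (\<lambda>\<zeta>. \<zeta> \<circ> h) -` B)" by blast
  also have "\<dots> \<in> kl_borel r l" by (rule kl_borel_INT[OF inter.IH inter.hyps(2)])
  finally show ?case .
qed

section \<open>Codes and their evaluation\<close>

locale borel_coding =
  fixes pair :: "'a \<times> 'a \<Rightarrow> 'a" and a0 a1 a2 :: 'a
  assumes inj_pair: "inj pair" and a0_a1: "a0 \<noteq> a1" and a0_a2: "a0 \<noteq> a2" and a1_a2: "a1 \<noteq> a2"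
begin

definition tag_pos :: 'a where
  "tag_pos = pair (a0, a0)"

definition child_pos :: "'a \<Rightarrow> 'a \<Rightarrow> 'a" where
  "child_pos i x = pair (a1, pair (i, x))"

definition child :: "'a \<Rightarrow> ('a \<Rightarrow> 'a) \<Rightarrow> 'a \<Rightarrow> 'a" where
  "child i c = c \<circ> child_pos i"

definition basic_holds :: "('a \<Rightarrow> 'a) \<Rightarrow> ('a \<Rightarrow> 'a) \<Rightarrow> bool" where
  "basic_holds c y \<longleftrightarrow> (\<forall>x. child a0 c x = a1 \<longrightarrow> y x = child a1 c x)"

definition mk_code :: "'a \<Rightarrow> ('a \<Rightarrow> 'a \<Rightarrow> 'a) \<Rightarrow> 'a \<Rightarrow> 'a" where
  "mk_code t g u = (if u = tag_pos then t else case_prod g (inv (case_prod child_pos) u))"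

(* Codes need not be well-founded; the ranks, strictly decreasing along subevaluations, make
   evaluation well-founded. *)
inductive code_value :: "'b rel \<Rightarrow> ('a \<Rightarrow> 'a) \<Rightarrow> ('a \<Rightarrow> 'a) \<Rightarrow> bool \<Rightarrow> 'b \<Rightarrow> bool" for W where
  basic: "\<alpha> \<in> Field W \<Longrightarrow> c tag_pos \<noteq> a1 \<Longrightarrow> c tag_pos \<noteq> a2 \<Longrightarrow>
    code_value W c y (basic_holds c y) \<alpha>"
| compl: "c tag_pos = a1 \<Longrightarrow> code_value W (child a0 c) y b \<beta> \<Longrightarrow> \<beta> \<in> underS W \<alpha> \<Longrightarrow>
    code_value W c y (\<not> b) \<alpha>"
| union_True: "c tag_pos = a2 \<Longrightarrow> code_value W (child i c) y True \<beta> \<Longrightarrow> \<beta> \<in> underS W \<alpha> \<Longrightarrow>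
    code_value W c y True \<alpha>"
| union_False: "c tag_pos = a2 \<Longrightarrow> (\<forall>i. \<exists>\<beta>\<in>underS W \<alpha>. code_value W (child i c) y False \<beta>) \<Longrightarrow>
    code_value W c y False \<alpha>"

lemma pair_eq_iff [simp]: "pair p = pair q \<longleftrightarrow> p = q"
  by (rule inj_eq[OF inj_pair])

lemma child_pos_ne_tag_pos: "child_pos i x \<noteq> tag_pos"
  using a0_a1 by (simp add: child_pos_def tag_pos_def)

lemma inj_child_pos: "inj (case_prod child_pos)"
  by (rule injI) (auto simp: child_pos_def)

lemma mk_code_tag_pos [simp]: "mk_code t g tag_pos = t"
  by (simp add: mk_code_def)

lemma child_mk_code [simp]: "child i (mk_code t g) = g i"
proof
  fix x
  have "inv (case_prod child_pos) (child_pos i x) = (i, x)"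
    using inv_f_f[OF inj_child_pos, of "(i, x)"] by simp
  then show "child i (mk_code t g) x = g i x"
    using child_pos_ne_tag_pos by (simp add: child_def mk_code_def)
qed

lemma code_value_Field: "code_value W c y b \<alpha> \<Longrightarrow> \<alpha> \<in> Field W"
  by (induction rule: code_value.induct) (auto intro: FieldI2 simp: underS_def)

lemma code_value_unique: "code_value W c y b \<alpha> \<Longrightarrow> code_value W c y b' \<alpha>' \<Longrightarrow> b = b'"
proof (induction arbitrary: b' \<alpha>' rule: code_value.induct)
  case (basic \<alpha> c y)
  from basic.prems show ?case
  proof cases
    case basic
    then show ?thesis by simp
  qed (use basic.hyps in simp_all)
next
  case (compl c y b \<beta> \<alpha>)
  from compl.prems show ?case
  proof cases
    case (compl b2 \<beta>2)
    then show ?thesis using compl.IH by simp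
  qed (use compl.hyps a1_a2 in simp_all)
next
  case (union_True c i y \<beta> \<alpha>)
  from union_True.prems show ?case
  proof cases
    case union_False
    then obtain \<beta>2 where "code_value W (child i c) y False \<beta>2" by blast
    then show ?thesis using union_True.IH by blast
  qed (use union_True.hyps a1_a2 in simp_all)
next
  case (union_False c \<alpha> y)
  from union_False.prems show ?case
  proof cases
    case (union_True i \<beta>2)
    then show ?thesis using union_False.IH by blast
  qed (use union_False.hyps a1_a2 in simp_all)
qed

definition codes :: "'b rel \<Rightarrow> ('a \<Rightarrow> 'a) \<Rightarrow> ('a \<Rightarrow> 'a) set \<Rightarrow> bool" where
  "codes W c A \<longleftrightarrow> (\<forall>y. \<exists>\<alpha>. code_value W c y (y \<in> A) \<alpha>)"

definition diag :: "'b rel \<Rightarrow> ('a \<Rightarrow> 'a) set" where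
  "diag W = {y. \<exists>\<alpha>. code_value W y y False \<alpha>}"

lemma diag_not_coded: "\<not> codes W c (diag W)"
proof
  assume "codes W c (diag W)"
  then obtain \<alpha> where \<alpha>: "code_value W c c (c \<in> diag W) \<alpha>"
    unfolding codes_def by blast
  show False
  proof (cases "c \<in> diag W")
    case True
    then obtain \<beta> where "code_value W c c False \<beta>" unfolding diag_def by blast
    with \<alpha> True show False using code_value_unique by fastforce
  next
    case False
    with \<alpha> have "code_value W c c False \<alpha>" by simp
    with False show False unfolding diag_def by blast
  qed
qed

section \<open>The diagonal set is \<open>(\<kappa>,\<kappa>\<^sup>+)\<close>-Borel\<close>

(* A function z stands for the code z \<circ> code_pos together with the point z \<circ> arg_pos; unlike
   the sets of points at which a fixed code evaluates, these sets are closed under the recursion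
   of code_value (value_set_eq). *)
definition code_pos :: "'a \<Rightarrow> 'a" where
  "code_pos x = pair (a1, x)"

definition arg_pos :: "'a \<Rightarrow> 'a" where
  "arg_pos x = pair (a2, x)"

definition value_set :: "'b rel \<Rightarrow> 'b \<Rightarrow> bool \<Rightarrow> ('a \<Rightarrow> 'a) set" where
  "value_set W \<alpha> b = {z. code_value W (z \<circ> code_pos) (z \<circ> arg_pos) b \<alpha>}"

definition basic_set :: "('a \<Rightarrow> 'a) set" where
  "basic_set = {z. basic_holds (z \<circ> code_pos) (z \<circ> arg_pos)}"

definition shift_child :: "'a \<Rightarrow> 'a \<Rightarrow> 'a" where
  "shift_child i u = (if u \<in> range code_pos then code_pos (child_pos i (inv code_pos u)) else u)"

definition diag_pos :: "'a \<Rightarrow> 'a" where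
  "diag_pos u = (if u \<in> range code_pos then inv code_pos u else inv arg_pos u)"

lemma inj_code_pos: "inj code_pos"
  by (rule injI) (simp add: code_pos_def)

lemma inj_arg_pos: "inj arg_pos"
  by (rule injI) (simp add: arg_pos_def)

lemma arg_pos_notin_range_code_pos: "arg_pos x \<notin> range code_pos"
  using a1_a2 by (auto simp: code_pos_def arg_pos_def)

lemma vimage_shift_child_value_set:
  "(\<lambda>z. z \<circ> shift_child i) -` value_set W \<alpha> b =
    {z. code_value W (child i (z \<circ> code_pos)) (z \<circ> arg_pos) b \<alpha>}"
proof -
  have "(z \<circ> shift_child i) \<circ> code_pos = child i (z \<circ> code_pos)"
    and "(z \<circ> shift_child i) \<circ> arg_pos = z \<circ> arg_pos" for z :: "'a \<Rightarrow> 'a"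
    by (auto simp: shift_child_def child_def inv_f_f[OF inj_code_pos] arg_pos_notin_range_code_pos)
  then show ?thesis by (simp add: value_set_def)
qed

lemma vimage_diag_pos_value_set:
  "(\<lambda>z. z \<circ> diag_pos) -` value_set W \<alpha> b = {y. code_value W y y b \<alpha>}"
proof -
  have "(y \<circ> diag_pos) \<circ> code_pos = y" and "(y \<circ> diag_pos) \<circ> arg_pos = y" for y :: "'a \<Rightarrow> 'a"
    by (auto simp: diag_pos_def inv_f_f[OF inj_code_pos] inv_f_f[OF inj_arg_pos]
        arg_pos_notin_range_code_pos)
  then show ?thesis by (simp add: value_set_def)
qed

lemma basic_set_eq:
  "basic_set = (\<Inter>x. - {z. z (code_pos (child_pos a0 x)) = a1} \<union>
     (\<Union>k. {z. z (code_pos (child_pos a1 x)) = k} \<inter> {z. z (arg_pos x) = k}))"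
  by (auto simp: basic_set_def basic_holds_def child_def)

lemma value_set_eq:
  "value_set W \<alpha> b =
     (if \<alpha> \<in> Field W
      then - {z. z (code_pos tag_pos) = a1} \<inter> - {z. z (code_pos tag_pos) = a2} \<inter>
        (if b then basic_set else - basic_set)
      else {})
   \<union> {z. z (code_pos tag_pos) = a1} \<inter>
       (\<Union>\<beta>\<in>underS W \<alpha>. (\<lambda>z. z \<circ> shift_child a0) -` value_set W \<beta> (\<not> b))
   \<union> {z. z (code_pos tag_pos) = a2} \<inter>
       (if b then (\<Union>i. \<Union>\<beta>\<in>underS W \<alpha>. (\<lambda>z. z \<circ> shift_child i) -` value_set W \<beta> True)
        else (\<Inter>i. \<Union>\<beta>\<in>underS W \<alpha>. (\<lambda>z. z \<circ> shift_child i) -` value_set W \<beta> False))"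
  (is "_ = ?rhs")
proof (rule set_eqI)
  fix z :: "'a \<Rightarrow> 'a"
  show "z \<in> value_set W \<alpha> b \<longleftrightarrow> z \<in> ?rhs"
    unfolding vimage_shift_child_value_set
    by (simp only: value_set_def mem_Collect_eq
        code_value.simps[of W "z \<circ> code_pos" "z \<circ> arg_pos" b \<alpha>])
      (cases b; auto simp: basic_set_def a1_a2)
qed

context
  fixes r :: "'a rel" and W :: "'b rel"
  assumes r: "Card_order r" "Field r = UNIV" "infinite (UNIV :: 'a set)"
    and W: "Card_order W" "infinite (Field W)" "|UNIV :: 'a set| \<le>o W"
begin

lemma point_kl_borel: "{z. z u = k} \<in> kl_borel r W"
  using r by (intro kl_borel_point) auto

lemma basic_set_kl_borel: "basic_set \<in> kl_borel r W"
  unfolding basic_set_eq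
  by (intro kl_borel_INT[OF _ W(3)] kl_borel_UN[OF _ W(3)] kl_borel_Un[OF W(1,2)]
      kl_borel_Int[OF W(1,2)] kl_borel.compl point_kl_borel)

lemma value_set_kl_borel: "value_set W \<alpha> b \<in> kl_borel r W"
proof -
  have "wo_rel W" using W(1) unfolding wo_rel_def by (rule card_order_on_well_order_on)
  have "\<forall>b. value_set W \<alpha> b \<in> kl_borel r W"
  proof (rule wo_rel.well_order_induct[OF \<open>wo_rel W\<close>])
    fix \<alpha>
    assume IH: "\<forall>\<beta>. \<beta> \<noteq> \<alpha> \<and> (\<beta>, \<alpha>) \<in> W \<longrightarrow> (\<forall>b. value_set W \<beta> b \<in> kl_borel r W)"
    have "|underS W \<alpha>| \<le>o W"
      using card_of_mono1[OF Order_Relation.underS_Field] card_of_Field_ordIso[OF W(1)]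
      by (rule ordLeq_ordIso_trans)
    then have below:
      "(\<Union>\<beta>\<in>underS W \<alpha>. (\<lambda>z. z \<circ> shift_child i) -` value_set W \<beta> b) \<in> kl_borel r W" for i b
    proof (rule kl_borel_UN[rotated])
      fix \<beta> assume "\<beta> \<in> underS W \<alpha>"
      then show "(\<lambda>z. z \<circ> shift_child i) -` value_set W \<beta> b \<in> kl_borel r W"
        using IH by (intro kl_borel_vimage_comp[OF r(2)]) (simp add: underS_def)
    qed
    have tagged: "{z. z (code_pos tag_pos) = t} \<in> kl_borel r W" for t
      by (rule point_kl_borel)
    show "\<forall>b. value_set W \<alpha> b \<in> kl_borel r W"
    proof
      fix b
      have "(if b then basic_set else - basic_set) \<in> kl_borel r W"
        using basic_set_kl_borel kl_borel.compl[OF basic_set_kl_borel] by simp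
      then have basic_part: "(if \<alpha> \<in> Field W
          then - {z. z (code_pos tag_pos) = a1} \<inter> - {z. z (code_pos tag_pos) = a2} \<inter>
            (if b then basic_set else - basic_set)
          else {}) \<in> kl_borel r W"
        using tagged by (simp add: kl_borel_Int[OF W(1,2)] kl_borel.compl kl_borel_empty)
      have union_part:
        "(if b then (\<Union>i. \<Union>\<beta>\<in>underS W \<alpha>. (\<lambda>z. z \<circ> shift_child i) -` value_set W \<beta> True)
          else (\<Inter>i. \<Union>\<beta>\<in>underS W \<alpha>. (\<lambda>z. z \<circ> shift_child i) -` value_set W \<beta> False))
          \<in> kl_borel r W"
        using kl_borel_UN[OF below W(3)] kl_borel_INT[OF below W(3)] by simp
      show "value_set W \<alpha> b \<in> kl_borel r W"
        unfolding value_set_eq[of W \<alpha> b]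
        using basic_part below union_part tagged
        by (simp add: kl_borel_Un[OF W(1,2)] kl_borel_Int[OF W(1,2)])
    qed
  qed
  then show ?thesis by blast
qed

lemma diag_kl_borel: "diag W \<in> kl_borel r W"
proof -
  have "diag W = (\<Union>\<alpha>\<in>Field W. (\<lambda>z. z \<circ> diag_pos) -` value_set W \<alpha> False)"
    unfolding vimage_diag_pos_value_set diag_def using code_value_Field by fast
  also have "\<dots> \<in> kl_borel r W"
  proof (rule kl_borel_UN)
    show "|Field W| \<le>o W" using card_of_Field_ordIso[OF W(1)] by (rule ordIso_imp_ordLeq)
  qed (use r(2) in \<open>intro kl_borel_vimage_comp value_set_kl_borel\<close>)
  finally show ?thesis .
qed

end

section \<open>Every \<open>\<kappa>\<close>-Borel set has a code\<close>

context
  fixes W :: "'b rel"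
  assumes bounded: "\<And>K. K \<subseteq> Field W \<Longrightarrow> |K| \<le>o |UNIV :: 'a set| \<Longrightarrow> \<exists>\<beta>\<in>Field W. K \<subseteq> underS W \<beta>"
begin

lemma exists_above: "\<alpha> \<in> Field W \<Longrightarrow> \<exists>\<beta>. \<alpha> \<in> underS W \<beta>"
  using bounded[of "{\<alpha>}"] card_of_singl_ordLeq[of "UNIV :: 'a set" \<alpha>] by auto

lemma codes_basic:
  "codes W (mk_code a0 (\<lambda>i x. if i = a0 then (if x \<in> X then a1 else a0) else \<eta> x))
     {\<zeta>. \<forall>x\<in>X. \<zeta> x = \<eta> x}"
  unfolding codes_def
proof
  fix y
  let ?c = "mk_code a0 (\<lambda>i x. if i = a0 then (if x \<in> X then a1 else a0) else \<eta> x)"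
  obtain \<alpha> where "\<alpha> \<in> Field W" using bounded[of "{}"] card_of_empty by auto
  then have "code_value W ?c y (basic_holds ?c y) \<alpha>"
    using a0_a1 a0_a2 by (intro code_value.basic) simp_all
  moreover have "basic_holds ?c y \<longleftrightarrow> y \<in> {\<zeta>. \<forall>x\<in>X. \<zeta> x = \<eta> x}"
    using a0_a1 by (auto simp: basic_holds_def)
  ultimately show "\<exists>\<alpha>. code_value W ?c y (y \<in> {\<zeta>. \<forall>x\<in>X. \<zeta> x = \<eta> x}) \<alpha>" by auto
qed

lemma codes_Compl: "codes W c A \<Longrightarrow> codes W (mk_code a1 (\<lambda>_. c)) (- A)"
  unfolding codes_def
proof
  fix y
  assume "\<forall>y. \<exists>\<alpha>. code_value W c y (y \<in> A) \<alpha>"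
  then obtain \<alpha> where \<alpha>: "code_value W c y (y \<in> A) \<alpha>" by blast
  then obtain \<beta> where "\<alpha> \<in> underS W \<beta>" using exists_above[OF code_value_Field[OF \<alpha>]] by blast
  with \<alpha> have "code_value W (mk_code a1 (\<lambda>_. c)) y (\<not> y \<in> A) \<beta>"
    by (intro code_value.compl) simp_all
  then show "\<exists>\<beta>. code_value W (mk_code a1 (\<lambda>_. c)) y (y \<in> - A) \<beta>" by auto
qed

lemma ex_codes_empty: "\<exists>c. codes W c {}"
  using codes_Compl[OF codes_basic[of "{}"]] by auto

lemma codes_UN:
  assumes "\<And>i. codes W (g i) (A i)"
  shows "codes W (mk_code a2 g) (\<Union>i. A i)"
  unfolding codes_def
proof
  fix y
  show "\<exists>\<beta>. code_value W (mk_code a2 g) y (y \<in> (\<Union>i. A i)) \<beta>"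
  proof (cases "y \<in> (\<Union>i. A i)")
    case True
    then obtain i where "y \<in> A i" by blast
    moreover obtain \<alpha> where "code_value W (g i) y (y \<in> A i) \<alpha>"
      using assms[of i] unfolding codes_def by blast
    ultimately have \<alpha>: "code_value W (g i) y True \<alpha>" by simp
    then obtain \<beta> where \<beta>: "\<alpha> \<in> underS W \<beta>" using exists_above[OF code_value_Field[OF \<alpha>]] by blast
    have "code_value W (mk_code a2 g) y True \<beta>"
      by (rule code_value.union_True[where i = i]) (use \<alpha> \<beta> in simp_all)
    with True show ?thesis by auto
  next
    case False
    have all_False: "\<forall>i. \<exists>\<alpha>. code_value W (g i) y False \<alpha>"
    proof
      fix i
      obtain \<alpha> where "code_value W (g i) y (y \<in> A i) \<alpha>"
        using assms[of i] unfolding codes_def by blast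
      with False show "\<exists>\<alpha>. code_value W (g i) y False \<alpha>" by auto
    qed
    obtain \<alpha> where \<alpha>: "\<And>i. code_value W (g i) y False (\<alpha> i)"
      using choice[OF all_False] by blast
    have "range \<alpha> \<subseteq> Field W" using code_value_Field[OF \<alpha>] by blast
    then obtain \<beta> where \<beta>: "range \<alpha> \<subseteq> underS W \<beta>" using bounded[OF _ card_of_image] by blast
    have "code_value W (mk_code a2 g) y False \<beta>"
      using \<alpha> \<beta> by (intro code_value.union_False) (simp_all add: image_subset_iff, blast)
    with False show ?thesis by auto
  qed
qed

lemma ex_codes_Union:
  assumes "|F| \<le>o |UNIV :: 'a set|" and "\<forall>B\<in>F. \<exists>c. codes W c B"
  shows "\<exists>c. codes W c (\<Union>F)"
proof (cases "F = {}")
  case True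
  then show ?thesis using ex_codes_empty by simp
next
  case False
  then obtain A :: "'a \<Rightarrow> ('a \<Rightarrow> 'a) set" where A: "range A = F"
    using card_of_ordLeq2[OF False, of "UNIV :: 'a set"] assms(1) by blast
  have "\<exists>c. codes W c (A i)" for i using assms(2) A by blast
  then obtain g where "\<And>i. codes W (g i) (A i)" by metis
  then have "codes W (mk_code a2 g) (\<Union>i. A i)" by (rule codes_UN)
  with A show ?thesis by blast
qed

lemma kl_borel_coded:
  assumes "l \<le>o |UNIV :: 'a set|" and "B \<in> kl_borel r l"
  shows "\<exists>c. codes W c B"
  using assms(2)
proof (induction rule: kl_borel.induct)
  case (basic A)
  then consider "A = {}" | X \<eta> where "A = {\<zeta>. \<forall>x\<in>X. \<zeta> x = \<eta> x}"
    unfolding basic_open_def by blast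
  then show ?case using ex_codes_empty codes_basic by cases blast+
next
  case (compl A)
  then show ?case using codes_Compl by blast
next
  case (union F)
  then show ?case by (intro ex_codes_Union ordLeq_transitive[OF _ assms(1)]) blast+
next
  case (inter F)
  have "|uminus ` F| \<le>o |UNIV :: 'a set|"
    using ordLeq_transitive[OF card_of_image ordLeq_transitive[OF inter.hyps(2) assms(1)]] .
  moreover have "\<forall>B\<in>uminus ` F. \<exists>c. codes W c B" using inter.IH codes_Compl by blast
  ultimately obtain c where "codes W c (\<Union>(uminus ` F))" using ex_codes_Union by blast
  then have "codes W (mk_code a1 (\<lambda>_. c)) (- \<Union>(uminus ` F))" by (rule codes_Compl)
  moreover have "- \<Union>(uminus ` F) = \<Inter>F" by blast
  ultimately show ?case by auto
qed

end

context
  fixes r :: "'a rel"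
  assumes r: "Card_order r" "Field r = UNIV" "infinite (UNIV :: 'a set)"
begin

lemma diag_cardSuc_kl_borel: "diag (cardSuc r) \<in> kl_borel r (cardSuc r)"
proof (rule diag_kl_borel[OF r cardSuc_Card_order[OF r(1)]])
  show "infinite (Field (cardSuc r))"
    using Cinfinite_cardSuc[of r] r unfolding cinfinite_def by simp
  show "|UNIV :: 'a set| \<le>o cardSuc r"
    using ordIso_ordLeq_trans[OF card_of_UNIV_ordIso[OF r(1,2)] cardSuc_ordLeq[OF r(1)]] .
qed

lemma diag_cardSuc_not_kl_borel: "diag (cardSuc r) \<notin> kl_borel r r"
proof
  have UNIV_r: "|UNIV :: 'a set| =o r" using card_of_UNIV_ordIso[OF r(1,2)] .
  have bounded: "\<exists>\<beta>\<in>Field (cardSuc r). K \<subseteq> underS (cardSuc r) \<beta>"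
    if "K \<subseteq> Field (cardSuc r)" and "|K| \<le>o |UNIV :: 'a set|" for K
    using r that ordLeq_ordIso_trans[OF that(2) UNIV_r] by (intro cardSuc_bounded_underS) simp_all
  assume "diag (cardSuc r) \<in> kl_borel r r"
  then obtain c where "codes (cardSuc r) c (diag (cardSuc r))"
    using kl_borel_coded[OF bounded ordIso_imp_ordLeq[OF ordIso_symmetric[OF UNIV_r]]] by blast
  with diag_not_coded show False by blast
qed

end

end

lemma borel_coding_exists:
  assumes "infinite (UNIV :: 'a set)"
  shows "\<exists>(pair :: 'a \<times> 'a \<Rightarrow> 'a) a0 a1 a2. borel_coding pair a0 a1 a2"
proof -
  obtain pair :: "'a \<times> 'a \<Rightarrow> 'a" where "inj pair"
    using card_of_ordLeq[of "UNIV :: ('a \<times> 'a) set" "UNIV :: 'a set"]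
      ordIso_imp_ordLeq[OF card_of_Times_same_infinite[OF assms]] by auto
  moreover obtain T :: "'a set" where "finite T" "card T = 3"
    using infinite_arbitrarily_large[OF assms] by blast
  then obtain a0 a1 a2 :: 'a where "a0 \<noteq> a1" "a0 \<noteq> a2" "a1 \<noteq> a2"
    unfolding card_3_iff by blast
  ultimately show ?thesis unfolding borel_coding_def by blast
qed

theorem corollary3p19:
  fixes r :: "'a rel"
  assumes "Card_order r" and "Field r = UNIV" and "infinite (UNIV :: 'a set)"
    and "regularCard r"
  shows "\<exists>A. A \<in> kl_borel r (cardSuc r) \<and> A \<notin> kl_borel r r"
proof -
  obtain pair :: "'a \<times> 'a \<Rightarrow> 'a" and a0 a1 a2 where "borel_coding pair a0 a1 a2"
    using borel_coding_exists[OF assms(3)] by blast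
  then interpret borel_coding pair a0 a1 a2 .
  show ?thesis
    using diag_cardSuc_kl_borel diag_cardSuc_not_kl_borel assms(1-3) by blast
qed

end
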